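(* Let $A$ and $B$ be rings, $f: A\to B$ a ring homomorphism and $J$ a proper ideal of $B$. Let $S$ be the set of regular central elements of $B$ (central elements that are not zero divisors), and assume $J\cap S\neq\varnothing$. Then $A\bowtie^{f}J$ is a weak Armendariz ring if and only if both $A$ and $f(A)+J$ are weak Armendariz rings.
   Context: All rings are associative with identity (not necessarily commutative), ring homomorphisms are unital, and ideals are two-sided. $\mathrm{nil}(R)$ denotes the set of nilpotent elements of a ring $R$. For a ring homomorphism $f:A\to B$ and an ideal $J$ of $B$, the amalgamation is the subring $A\bowtie^{f}J=\{(a,f(a)+j)\mid a\in A,\ j\in J\}$ of $A\times B$; $f(A)+J=\{f(a)+j: a\in A, j\in J\}$ is a subring of $B$. A ring $R$ is weak Armendariz if whenever $p(x)=\sum_{i=0}^n a_ix^i$ and $q(x)=\sum_{j=0}^m b_jx^j$ in $R[x]$ satisfy $p(x)q(x)=0$, then $a_ib_j\in\mathrm{nil}(R)$ for all $i,j$. *)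

theory Defs
  imports "HOL-Algebra.Algebra"
begin

definition nil_elems :: "('a, 'm) ring_scheme \<Rightarrow> 'a set" where
  "nil_elems R = {a \<in> carrier R. \<exists>n::nat. a [^]\<^bsub>R\<^esub> n = \<zero>\<^bsub>R\<^esub>}"

definition weak_armendariz :: "('a, 'm) ring_scheme \<Rightarrow> bool" where
  "weak_armendariz R \<longleftrightarrow>
     (\<forall>p \<in> carrier (UP R). \<forall>q \<in> carrier (UP R).
        p \<otimes>\<^bsub>UP R\<^esub> q = \<zero>\<^bsub>UP R\<^esub> \<longrightarrow>
        (\<forall>i j. coeff (UP R) p i \<otimes>\<^bsub>R\<^esub> coeff (UP R) q j \<in> nil_elems R))"

definition regular_central :: "('a, 'm) ring_scheme \<Rightarrow> 'a set" where
  "regular_central B = {s \<in> carrier B.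
      (\<forall>b \<in> carrier B. s \<otimes>\<^bsub>B\<^esub> b = b \<otimes>\<^bsub>B\<^esub> s) \<and>
      (\<forall>b \<in> carrier B. s \<otimes>\<^bsub>B\<^esub> b = \<zero>\<^bsub>B\<^esub> \<longrightarrow> b = \<zero>\<^bsub>B\<^esub>) \<and>
      (\<forall>b \<in> carrier B. b \<otimes>\<^bsub>B\<^esub> s = \<zero>\<^bsub>B\<^esub> \<longrightarrow> b = \<zero>\<^bsub>B\<^esub>)}"

definition amalgamation ::
  "('a, 'm) ring_scheme \<Rightarrow> ('b, 'n) ring_scheme \<Rightarrow> ('a \<Rightarrow> 'b) \<Rightarrow> 'b set \<Rightarrow> ('a \<times> 'b) ring" where
  "amalgamation A B f J = (RDirProd A B)\<lparr>carrier :=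
      {(a, f a \<oplus>\<^bsub>B\<^esub> j) | a j. a \<in> carrier A \<and> j \<in> J}\<rparr>"

definition img_plus_ideal ::
  "('a, 'm) ring_scheme \<Rightarrow> ('b, 'n) ring_scheme \<Rightarrow> ('a \<Rightarrow> 'b) \<Rightarrow> 'b set \<Rightarrow> ('b, 'n) ring_scheme" where
  "img_plus_ideal A B f J = B\<lparr>carrier := {f a \<oplus>\<^bsub>B\<^esub> j | a j. a \<in> carrier A \<and> j \<in> J}\<rparr>"

end

theory Submission
  imports Defs
begin

text \<open>
  The amalgamation \<open>A \<bowtie>\<^sup>f J\<close> sits in \<open>A \<times> (f(A) + J)\<close> as a subdirect product (the two
  projections have trivially intersecting kernels) and contains \<open>A\<close> via \<open>a \<mapsto> (a, f a)\<close>.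
  Weak Armendariz passes to subrings and to subdirect products of weak Armendariz rings, because
  a coefficient product of \<open>pq = 0\<close> then has a power in both kernels. This gives everything
  except that \<open>f(A) + J\<close> inherits the property. For that, take a regular central \<open>s \<in> J\<close>:
  if \<open>pq = 0\<close> over \<open>f(A) + J\<close>, then \<open>(0, s p)\<close> and \<open>(0, s q)\<close> are polynomials over the
  amalgamation with product \<open>(0, s\<^sup>2 pq) = 0\<close>, so \<open>(s\<^sup>2 p\<^sub>i q\<^sub>j)\<^sup>n = s\<^sup>2\<^sup>n (p\<^sub>i q\<^sub>j)\<^sup>n = 0\<close>,
  and regularity of \<open>s\<close> cancels \<open>s\<^sup>2\<^sup>n\<close>.
\<close>

lemma UP_mult_eq:
  "p \<in> up R \<Longrightarrow> q \<in> up R \<Longrightarrow>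
   p \<otimes>\<^bsub>UP R\<^esub> q = (\<lambda>n. \<Oplus>\<^bsub>R\<^esub>i \<in> {..n}. p i \<otimes>\<^bsub>R\<^esub> q (n - i))"
  by (simp add: UP_def)

lemma weak_armendariz_iff:
  "weak_armendariz R \<longleftrightarrow>
     (\<forall>p \<in> up R. \<forall>q \<in> up R. p \<otimes>\<^bsub>UP R\<^esub> q = (\<lambda>n. \<zero>\<^bsub>R\<^esub>) \<longrightarrow>
        (\<forall>i j. p i \<otimes>\<^bsub>R\<^esub> q j \<in> nil_elems R))"
  by (simp add: weak_armendariz_def UP_def)

lemma ring_hom_up_closed:
  assumes "ring R" "ring S" "h \<in> ring_hom R S" "p \<in> up R"
  shows "(\<lambda>n. h (p n)) \<in> up S"
proof -
  interpret ring_hom_ring R S h using ring_hom_ringI2 assms by blast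
  from assms(4) obtain m where "bound \<zero>\<^bsub>R\<^esub> m p" by auto
  then have "bound \<zero>\<^bsub>S\<^esub> m (\<lambda>n. h (p n))" by (auto simp: bound_def)
  moreover have "\<And>n. h (p n) \<in> carrier S" using hom_closed[OF mem_upD[OF assms(4)]] .
  ultimately show ?thesis by auto
qed

lemma ring_hom_UP_mult:
  assumes "ring R" "ring S" "h \<in> ring_hom R S" "p \<in> up R" "q \<in> up R"
  shows "(\<lambda>n. h (p n)) \<otimes>\<^bsub>UP S\<^esub> (\<lambda>n. h (q n)) = (\<lambda>n. h ((p \<otimes>\<^bsub>UP R\<^esub> q) n))"
proof -
  interpret ring_hom_ring R S h using ring_hom_ringI2 assms by blast
  show ?thesis
    using assms(4,5) by (simp add: UP_mult_eq ring_hom_up_closed[OF assms(1-3)] Pi_def mem_upD comp_def)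
qed

lemma ring_hom_UP_mult_eq_zero:
  assumes "ring R" "ring S" "h \<in> ring_hom R S" "p \<in> up R" "q \<in> up R"
    and "p \<otimes>\<^bsub>UP R\<^esub> q = (\<lambda>n. \<zero>\<^bsub>R\<^esub>)"
  shows "(\<lambda>n. h (p n)) \<otimes>\<^bsub>UP S\<^esub> (\<lambda>n. h (q n)) = (\<lambda>n. \<zero>\<^bsub>S\<^esub>)"
  using ring_hom_UP_mult[OF assms(1-5)] assms(6) ring_hom_zero[OF assms(3,1,2)] by simp

lemma weak_armendariz_ring_hom_coeff_pow_eq_zero:
  assumes "ring R" "ring S" "h \<in> ring_hom R S" "weak_armendariz S"
    and "p \<in> up R" "q \<in> up R" "p \<otimes>\<^bsub>UP R\<^esub> q = (\<lambda>n. \<zero>\<^bsub>R\<^esub>)"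
  shows "\<exists>n. \<forall>m::nat \<ge> n. h ((p i \<otimes>\<^bsub>R\<^esub> q j) [^]\<^bsub>R\<^esub> m) = \<zero>\<^bsub>S\<^esub>"
proof -
  interpret ring_hom_ring R S h using ring_hom_ringI2 assms by blast
  have pq_carrier: "p i \<in> carrier R" "q j \<in> carrier R" using assms(5,6) by auto
  have "h (p i) \<otimes>\<^bsub>S\<^esub> h (q j) \<in> nil_elems S"
    using assms(4) ring_hom_UP_mult_eq_zero[OF assms(1-3,5-7)]
      ring_hom_up_closed[OF assms(1-3,5)] ring_hom_up_closed[OF assms(1-3,6)]
    unfolding weak_armendariz_iff by blast
  then obtain n :: nat where n: "(h (p i) \<otimes>\<^bsub>S\<^esub> h (q j)) [^]\<^bsub>S\<^esub> n = \<zero>\<^bsub>S\<^esub>"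
    by (auto simp: nil_elems_def)
  have "h ((p i \<otimes>\<^bsub>R\<^esub> q j) [^]\<^bsub>R\<^esub> m) = \<zero>\<^bsub>S\<^esub>" if "m \<ge> n" for m
  proof -
    obtain k where "m = n + k" using \<open>m \<ge> n\<close> le_Suc_ex by blast
    then show ?thesis using n pq_carrier by (simp add: hom_nat_pow S.nat_pow_mult[symmetric])
  qed
  then show ?thesis by blast
qed

lemma weak_armendariz_subdirect:
  assumes R: "ring R" and S: "ring S" "g \<in> ring_hom R S" "weak_armendariz S"
    and T: "ring T" "h \<in> ring_hom R T" "weak_armendariz T"
    and ker: "\<And>x. x \<in> carrier R \<Longrightarrow> g x = \<zero>\<^bsub>S\<^esub> \<Longrightarrow> h x = \<zero>\<^bsub>T\<^esub> \<Longrightarrow> x = \<zero>\<^bsub>R\<^esub>"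
  shows "weak_armendariz R"
  unfolding weak_armendariz_iff
proof (intro ballI impI allI)
  interpret R: ring R by (rule R)
  fix p q i j assume p: "p \<in> up R" and q: "q \<in> up R" and pq: "p \<otimes>\<^bsub>UP R\<^esub> q = (\<lambda>n. \<zero>\<^bsub>R\<^esub>)"
  obtain n1 where n1: "\<forall>m::nat \<ge> n1. g ((p i \<otimes>\<^bsub>R\<^esub> q j) [^]\<^bsub>R\<^esub> m) = \<zero>\<^bsub>S\<^esub>"
    using weak_armendariz_ring_hom_coeff_pow_eq_zero[OF R S p q pq] by blast
  obtain n2 where n2: "\<forall>m::nat \<ge> n2. h ((p i \<otimes>\<^bsub>R\<^esub> q j) [^]\<^bsub>R\<^esub> m) = \<zero>\<^bsub>T\<^esub>"
    using weak_armendariz_ring_hom_coeff_pow_eq_zero[OF R T p q pq] by blast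
  have x: "p i \<otimes>\<^bsub>R\<^esub> q j \<in> carrier R" using p q by auto
  moreover have "g ((p i \<otimes>\<^bsub>R\<^esub> q j) [^]\<^bsub>R\<^esub> max n1 n2) = \<zero>\<^bsub>S\<^esub>"
    and "h ((p i \<otimes>\<^bsub>R\<^esub> q j) [^]\<^bsub>R\<^esub> max n1 n2) = \<zero>\<^bsub>T\<^esub>"
    using n1 n2 by simp_all
  ultimately have "(p i \<otimes>\<^bsub>R\<^esub> q j) [^]\<^bsub>R\<^esub> max n1 n2 = \<zero>\<^bsub>R\<^esub>"
    using ker R.nat_pow_closed by blast
  then show "p i \<otimes>\<^bsub>R\<^esub> q j \<in> nil_elems R" using x unfolding nil_elems_def by blast
qed

lemma weak_armendariz_inj_ring_hom:
  assumes "ring R" "ring S" "h \<in> ring_hom R S" "inj_on h (carrier R)" "weak_armendariz S"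
  shows "weak_armendariz R"
proof (rule weak_armendariz_subdirect[OF assms(1-3,5) assms(2,3,5)])
  fix x assume "x \<in> carrier R" "h x = \<zero>\<^bsub>S\<^esub>"
  moreover have "h \<zero>\<^bsub>R\<^esub> = \<zero>\<^bsub>S\<^esub>" by (rule ring_hom_zero[OF assms(3,1,2)])
  ultimately show "x = \<zero>\<^bsub>R\<^esub>"
    by (intro inj_onD[OF assms(4)]) (simp_all add: ring.ring_simprules(2)[OF assms(1)])
qed

lemma (in ring) nat_pow_mult_central:
  assumes "s \<in> carrier R" "z \<in> carrier R" "\<forall>b \<in> carrier R. s \<otimes> b = b \<otimes> s"
  shows "(s \<otimes> z) [^] (n::nat) = s [^] n \<otimes> z [^] n"
proof (induction n)
  case 0 then show ?case by simp
next
  case (Suc n)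
  have "(s \<otimes> z) [^] Suc n = s [^] n \<otimes> (z [^] n \<otimes> s) \<otimes> z"
    using Suc assms(1,2) by (simp add: m_assoc)
  also have "z [^] n \<otimes> s = s \<otimes> z [^] n" using assms by simp
  finally show ?case using assms(1,2) by (simp add: m_assoc)
qed

lemma (in ring) nat_pow_regular_cancel:
  assumes "s \<in> carrier R" "\<forall>b \<in> carrier R. s \<otimes> b = \<zero> \<longrightarrow> b = \<zero>"
  shows "w \<in> carrier R \<Longrightarrow> s [^] (n::nat) \<otimes> w = \<zero> \<Longrightarrow> w = \<zero>"
proof (induction n arbitrary: w)
  case 0 then show ?case by simp
next
  case (Suc n)
  then have "s [^] n \<otimes> (s \<otimes> w) = \<zero>" using assms(1) by (simp add: m_assoc)
  then have "s \<otimes> w = \<zero>" using Suc assms(1) by simp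
  then show ?case using assms(2) Suc.prems(1) by blast
qed

lemma (in ring) regular_central_mult_nilpotent:
  assumes "s \<in> regular_central R" "z \<in> carrier R" "(s \<otimes> z) [^] (n::nat) = \<zero>"
  shows "z [^] n = \<zero>"
proof -
  have s: "s \<in> carrier R" "\<forall>b \<in> carrier R. s \<otimes> b = b \<otimes> s"
    "\<forall>b \<in> carrier R. s \<otimes> b = \<zero> \<longrightarrow> b = \<zero>"
    using assms(1) unfolding regular_central_def by blast+
  have "s [^] n \<otimes> z [^] n = \<zero>"
    using assms(3) nat_pow_mult_central[OF s(1) assms(2) s(2)] by simp
  then show ?thesis
    using nat_pow_regular_cancel[OF s(1,3)] assms(2) by blast
qed

lemma (in ring) central_mult_mult:
  assumes "s \<in> carrier R" "\<forall>b \<in> carrier R. s \<otimes> b = b \<otimes> s" "a \<in> carrier R" "b \<in> carrier R"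
  shows "(s \<otimes> a) \<otimes> (s \<otimes> b) = s \<otimes> (s \<otimes> (a \<otimes> b))"
proof -
  have "(s \<otimes> a) \<otimes> (s \<otimes> b) = s \<otimes> (a \<otimes> s) \<otimes> b" using assms(1,3,4) by (simp add: m_assoc)
  also have "a \<otimes> s = s \<otimes> a" using assms(2,3) by simp
  finally show ?thesis using assms(1,3,4) by (simp add: m_assoc)
qed

lemma (in ring) UP_mult_central_scale:
  assumes s: "s \<in> carrier R" "\<forall>b \<in> carrier R. s \<otimes> b = b \<otimes> s"
    and p: "p \<in> up R" and q: "q \<in> up R"
  shows "(\<lambda>n. s \<otimes> p n) \<otimes>\<^bsub>UP R\<^esub> (\<lambda>n. s \<otimes> q n) = (\<lambda>n. s \<otimes> (s \<otimes> (p \<otimes>\<^bsub>UP R\<^esub> q) n))"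
proof -
  have coeffs: "\<And>i. p i \<in> carrier R" "\<And>i. q i \<in> carrier R" using p q by auto
  have "(\<Oplus>i \<in> {..n}. (s \<otimes> p i) \<otimes> (s \<otimes> q (n - i)))
      = s \<otimes> (s \<otimes> (\<Oplus>i \<in> {..n}. p i \<otimes> q (n - i)))" for n
  proof -
    have "(\<Oplus>i \<in> {..n}. (s \<otimes> p i) \<otimes> (s \<otimes> q (n - i)))
        = (\<Oplus>i \<in> {..n}. s \<otimes> (s \<otimes> (p i \<otimes> q (n - i))))"
      by (intro finsum_cong' refl) (simp_all add: central_mult_mult[OF s] coeffs s(1) Pi_def)
    then show ?thesis
      using coeffs s(1) by (simp add: finsum_rdistr Pi_def)
  qed
  then show ?thesis
    using p q s(1) by (simp add: UP_mult_eq up_smult_closed)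
qed

context
  fixes A :: "('a, 'm) ring_scheme" and B :: "('b, 'n) ring_scheme"
    and f :: "'a \<Rightarrow> 'b" and J :: "'b set"
  assumes A: "ring A" and B: "ring B" and f: "f \<in> ring_hom A B" and J: "ideal J B"
begin

interpretation A: ring A by (rule A)
interpretation B: ring B by (rule B)
interpretation f: ring_hom_ring A B f using ring_hom_ringI2[OF A B f] .
interpretation J: ideal J B by (rule J)

abbreviation (input) AJ where "AJ \<equiv> amalgamation A B f J"
abbreviation (input) fAJ where "fAJ \<equiv> img_plus_ideal A B f J"

lemma amalgamation_simps:
  "carrier AJ = {(a, f a \<oplus>\<^bsub>B\<^esub> j) | a j. a \<in> carrier A \<and> j \<in> J}"
  "(a, b) \<otimes>\<^bsub>AJ\<^esub> (a', b') = (a \<otimes>\<^bsub>A\<^esub> a', b \<otimes>\<^bsub>B\<^esub> b')"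
  "(a, b) \<oplus>\<^bsub>AJ\<^esub> (a', b') = (a \<oplus>\<^bsub>A\<^esub> a', b \<oplus>\<^bsub>B\<^esub> b')"
  "\<zero>\<^bsub>AJ\<^esub> = (\<zero>\<^bsub>A\<^esub>, \<zero>\<^bsub>B\<^esub>)"
  "\<one>\<^bsub>AJ\<^esub> = (\<one>\<^bsub>A\<^esub>, \<one>\<^bsub>B\<^esub>)"
  by (simp_all add: amalgamation_def RDirProd_def DirProd_def monoid.defs)

lemma img_plus_ideal_simps:
  "carrier fAJ = {f a \<oplus>\<^bsub>B\<^esub> j | a j. a \<in> carrier A \<and> j \<in> J}"
  "x \<otimes>\<^bsub>fAJ\<^esub> y = x \<otimes>\<^bsub>B\<^esub> y"
  "x \<oplus>\<^bsub>fAJ\<^esub> y = x \<oplus>\<^bsub>B\<^esub> y"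
  "\<zero>\<^bsub>fAJ\<^esub> = \<zero>\<^bsub>B\<^esub>"
  "\<one>\<^bsub>fAJ\<^esub> = \<one>\<^bsub>B\<^esub>"
  by (simp_all add: img_plus_ideal_def)

lemma amalgamation_memI: "a \<in> carrier A \<Longrightarrow> j \<in> J \<Longrightarrow> (a, f a \<oplus>\<^bsub>B\<^esub> j) \<in> carrier AJ"
  unfolding amalgamation_simps by blast

lemma amalgamation_memE:
  assumes "x \<in> carrier AJ"
  obtains a j where "x = (a, f a \<oplus>\<^bsub>B\<^esub> j)" "a \<in> carrier A" "j \<in> J" "j \<in> carrier B"
  using assms J.a_subset unfolding amalgamation_simps by blast

lemma subring_amalgamation: "subring (carrier AJ) (RDirProd A B)"
proof (rule ring.subringI[OF RDirProd_ring[OF A B]])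
  show "carrier AJ \<subseteq> carrier (RDirProd A B)"
    by (auto simp: RDirProd_carrier elim: amalgamation_memE)
  show "\<one>\<^bsub>RDirProd A B\<^esub> \<in> carrier AJ"
    using amalgamation_memI[OF A.one_closed J.zero_closed]
    by (simp add: RDirProd_def DirProd_def monoid.defs)
next
  fix x y assume "x \<in> carrier AJ" "y \<in> carrier AJ"
  then obtain a j a' j' where x: "x = (a, f a \<oplus>\<^bsub>B\<^esub> j)" and y: "y = (a', f a' \<oplus>\<^bsub>B\<^esub> j')"
    and a: "a \<in> carrier A" "a' \<in> carrier A" and j: "j \<in> J" "j' \<in> J" "j \<in> carrier B" "j' \<in> carrier B"
    by (metis amalgamation_memE)
  have "(f a \<oplus>\<^bsub>B\<^esub> j) \<otimes>\<^bsub>B\<^esub> (f a' \<oplus>\<^bsub>B\<^esub> j')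
      = f (a \<otimes>\<^bsub>A\<^esub> a') \<oplus>\<^bsub>B\<^esub> ((f a \<otimes>\<^bsub>B\<^esub> j' \<oplus>\<^bsub>B\<^esub> j \<otimes>\<^bsub>B\<^esub> f a') \<oplus>\<^bsub>B\<^esub> j \<otimes>\<^bsub>B\<^esub> j')"
    using a j by (simp add: B.l_distr B.r_distr B.a_ac)
  moreover have "(f a \<otimes>\<^bsub>B\<^esub> j' \<oplus>\<^bsub>B\<^esub> j \<otimes>\<^bsub>B\<^esub> f a') \<oplus>\<^bsub>B\<^esub> j \<otimes>\<^bsub>B\<^esub> j' \<in> J"
    using a j by (simp add: J.I_l_closed J.I_r_closed J.a_closed)
  ultimately have "(a \<otimes>\<^bsub>A\<^esub> a', (f a \<oplus>\<^bsub>B\<^esub> j) \<otimes>\<^bsub>B\<^esub> (f a' \<oplus>\<^bsub>B\<^esub> j')) \<in> carrier AJ"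
    using amalgamation_memI[OF A.m_closed[OF a]] by metis
  then show "x \<otimes>\<^bsub>RDirProd A B\<^esub> y \<in> carrier AJ"
    using x y by (simp add: RDirProd_def DirProd_def monoid.defs)
  have "(f a \<oplus>\<^bsub>B\<^esub> j) \<oplus>\<^bsub>B\<^esub> (f a' \<oplus>\<^bsub>B\<^esub> j') = f (a \<oplus>\<^bsub>A\<^esub> a') \<oplus>\<^bsub>B\<^esub> (j \<oplus>\<^bsub>B\<^esub> j')"
    using a j by (simp add: B.a_ac)
  then show "x \<oplus>\<^bsub>RDirProd A B\<^esub> y \<in> carrier AJ"
    using amalgamation_memI[of "a \<oplus>\<^bsub>A\<^esub> a'" "j \<oplus>\<^bsub>B\<^esub> j'"] a j x y
    by (simp add: J.a_closed RDirProd_def DirProd_def monoid.defs)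
next
  fix x assume "x \<in> carrier AJ"
  then obtain a j where x: "x = (a, f a \<oplus>\<^bsub>B\<^esub> j)" and a: "a \<in> carrier A"
    and j: "j \<in> J" "j \<in> carrier B"
    by (metis amalgamation_memE)
  have "\<ominus>\<^bsub>RDirProd A B\<^esub> x = (\<ominus>\<^bsub>A\<^esub> a, \<ominus>\<^bsub>B\<^esub> (f a \<oplus>\<^bsub>B\<^esub> j))"
    using x a j by (intro abelian_group.minus_equality[OF ring.is_abelian_group[OF RDirProd_ring[OF A B]]])
      (simp_all add: RDirProd_carrier RDirProd_def DirProd_def monoid.defs A.l_neg B.l_neg)
  also have "\<dots> = (\<ominus>\<^bsub>A\<^esub> a, f (\<ominus>\<^bsub>A\<^esub> a) \<oplus>\<^bsub>B\<^esub> \<ominus>\<^bsub>B\<^esub> j)"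
    using a j by (simp add: B.minus_add)
  finally show "\<ominus>\<^bsub>RDirProd A B\<^esub> x \<in> carrier AJ"
    using amalgamation_memI[OF A.a_inv_closed[OF a] J.a_inv_closed[OF j(1)]] by simp
qed

lemma ring_amalgamation: "ring AJ"
  using ring.subring_is_ring[OF RDirProd_ring[OF A B] subring_amalgamation]
  by (simp add: amalgamation_def)

lemma fst_ring_hom_amalgamation: "fst \<in> ring_hom AJ A"
  by (rule ring_hom_memI) (auto simp: amalgamation_simps elim: amalgamation_memE)

lemma snd_ring_hom_amalgamation: "snd \<in> ring_hom AJ B"
  by (rule ring_hom_memI) (auto simp: amalgamation_simps elim: amalgamation_memE)

lemma diagonal_ring_hom_amalgamation: "(\<lambda>a. (a, f a)) \<in> ring_hom A AJ"
  using amalgamation_memI[OF _ J.zero_closed]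
  by (intro ring_hom_memI) (simp_all add: amalgamation_simps)

lemma snd_image_amalgamation: "snd ` carrier AJ = carrier fAJ"
  by (force simp: amalgamation_simps img_plus_ideal_simps)

lemma ring_img_plus_ideal: "ring fAJ"
proof -
  interpret snd: ring_hom_ring AJ B snd
    using ring_hom_ringI2[OF ring_amalgamation B snd_ring_hom_amalgamation] .
  show ?thesis
    using B.subring_is_ring[OF snd.img_is_subring[OF ring.carrier_is_subring[OF ring_amalgamation]]]
    by (simp add: snd_image_amalgamation img_plus_ideal_def)
qed

lemma snd_ring_hom_img_plus_ideal: "snd \<in> ring_hom AJ fAJ"
  using snd_ring_hom_amalgamation unfolding ring_hom_def
  by (auto simp: img_plus_ideal_simps(2-5) simp flip: snd_image_amalgamation)

lemma img_plus_ideal_inclusion_ring_hom: "(\<lambda>x. x) \<in> ring_hom fAJ B"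
  using snd_ring_hom_amalgamation unfolding ring_hom_def
  by (auto simp: img_plus_ideal_simps(2-5) simp flip: snd_image_amalgamation)

lemma weak_armendariz_base_if_amalgamation:
  "weak_armendariz AJ \<Longrightarrow> weak_armendariz A"
  by (rule weak_armendariz_inj_ring_hom[OF A ring_amalgamation diagonal_ring_hom_amalgamation])
    (auto simp: inj_on_def)

lemma weak_armendariz_amalgamationI:
  "weak_armendariz A \<Longrightarrow> weak_armendariz fAJ \<Longrightarrow> weak_armendariz AJ"
  by (rule weak_armendariz_subdirect[OF ring_amalgamation
        A fst_ring_hom_amalgamation _ ring_img_plus_ideal snd_ring_hom_img_plus_ideal])
    (auto simp: amalgamation_simps img_plus_ideal_simps)

lemma scaled_up_amalgamation:
  assumes "s \<in> J" "p \<in> up B"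
  shows "(\<lambda>n. (\<zero>\<^bsub>A\<^esub>, s \<otimes>\<^bsub>B\<^esub> p n)) \<in> up AJ"
proof (rule mem_upI)
  fix n
  have "s \<otimes>\<^bsub>B\<^esub> p n \<in> J" using assms by (simp add: J.I_r_closed mem_upD)
  then show "(\<zero>\<^bsub>A\<^esub>, s \<otimes>\<^bsub>B\<^esub> p n) \<in> carrier AJ"
    using amalgamation_memI[OF A.zero_closed] J.a_subset by (metis B.l_zero f.hom_zero subsetD)
next
  from assms(2) obtain k where "bound \<zero>\<^bsub>B\<^esub> k p" by auto
  then have "bound \<zero>\<^bsub>AJ\<^esub> k (\<lambda>n. (\<zero>\<^bsub>A\<^esub>, s \<otimes>\<^bsub>B\<^esub> p n))"
    using assms(1) J.a_subset by (auto simp: bound_def amalgamation_simps)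
  then show "\<exists>k. bound \<zero>\<^bsub>AJ\<^esub> k (\<lambda>n. (\<zero>\<^bsub>A\<^esub>, s \<otimes>\<^bsub>B\<^esub> p n))" by blast
qed

lemma scaled_UP_mult_eq_zero_amalgamation:
  assumes s: "s \<in> J" "\<forall>b \<in> carrier B. s \<otimes>\<^bsub>B\<^esub> b = b \<otimes>\<^bsub>B\<^esub> s"
    and p: "p \<in> up B" and q: "q \<in> up B" and pq: "p \<otimes>\<^bsub>UP B\<^esub> q = (\<lambda>n. \<zero>\<^bsub>B\<^esub>)"
  shows "(\<lambda>n. (\<zero>\<^bsub>A\<^esub>, s \<otimes>\<^bsub>B\<^esub> p n)) \<otimes>\<^bsub>UP AJ\<^esub> (\<lambda>n. (\<zero>\<^bsub>A\<^esub>, s \<otimes>\<^bsub>B\<^esub> q n)) = (\<lambda>n. \<zero>\<^bsub>AJ\<^esub>)"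
proof -
  define P where "P = (\<lambda>n. (\<zero>\<^bsub>A\<^esub>, s \<otimes>\<^bsub>B\<^esub> p n))"
  define Q where "Q = (\<lambda>n. (\<zero>\<^bsub>A\<^esub>, s \<otimes>\<^bsub>B\<^esub> q n))"
  have s_carrier: "s \<in> carrier B" using s(1) J.a_subset by blast
  have P: "P \<in> up AJ" and Q: "Q \<in> up AJ"
    unfolding P_def Q_def using scaled_up_amalgamation s(1) p q by blast+
  note fst_hom = ring_amalgamation A fst_ring_hom_amalgamation
  note snd_hom = ring_amalgamation B snd_ring_hom_amalgamation
  have "(\<lambda>n. fst (P n)) \<otimes>\<^bsub>UP A\<^esub> (\<lambda>n. fst (Q n)) = (\<lambda>n. \<zero>\<^bsub>A\<^esub>)"
    using ring_hom_up_closed[OF fst_hom P] ring_hom_up_closed[OF fst_hom Q]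
    by (simp add: UP_mult_eq P_def Q_def A.finsum_zero)
  then have fst_PQ: "fst ((P \<otimes>\<^bsub>UP AJ\<^esub> Q) n) = \<zero>\<^bsub>A\<^esub>" for n
    using ring_hom_UP_mult[OF fst_hom P Q] by metis
  have "(\<lambda>n. snd (P n)) \<otimes>\<^bsub>UP B\<^esub> (\<lambda>n. snd (Q n)) = (\<lambda>n. \<zero>\<^bsub>B\<^esub>)"
    using B.UP_mult_central_scale[OF s_carrier s(2) p q] pq s_carrier
    by (simp add: P_def Q_def)
  then have snd_PQ: "snd ((P \<otimes>\<^bsub>UP AJ\<^esub> Q) n) = \<zero>\<^bsub>B\<^esub>" for n
    using ring_hom_UP_mult[OF snd_hom P Q] by metis
  show ?thesis
    using fst_PQ snd_PQ unfolding P_def Q_def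
    by (simp add: amalgamation_simps prod_eq_iff fun_eq_iff)
qed

lemma weak_armendariz_img_plus_ideal_if_amalgamation:
  assumes AJ: "weak_armendariz AJ" and s: "s \<in> J" "s \<in> regular_central B"
  shows "weak_armendariz fAJ"
  unfolding weak_armendariz_iff
proof (intro ballI impI allI)
  interpret snd: ring_hom_ring AJ B snd
    using ring_hom_ringI2[OF ring_amalgamation B snd_ring_hom_amalgamation] .
  have s_carrier: "s \<in> carrier B" and central: "\<forall>b \<in> carrier B. s \<otimes>\<^bsub>B\<^esub> b = b \<otimes>\<^bsub>B\<^esub> s"
    using s(2) unfolding regular_central_def by blast+
  note incl = ring_img_plus_ideal B img_plus_ideal_inclusion_ring_hom
  fix p q i j assume p: "p \<in> up fAJ" and q: "q \<in> up fAJ"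
    and pq: "p \<otimes>\<^bsub>UP fAJ\<^esub> q = (\<lambda>n. \<zero>\<^bsub>fAJ\<^esub>)"
  have pB: "p \<in> up B" and qB: "q \<in> up B"
    using ring_hom_up_closed[OF incl p] ring_hom_up_closed[OF incl q] by simp_all
  have "p \<otimes>\<^bsub>UP B\<^esub> q = (\<lambda>n. \<zero>\<^bsub>B\<^esub>)"
    using ring_hom_UP_mult_eq_zero[OF incl p q pq] by simp
  moreover define P where "P = (\<lambda>n. (\<zero>\<^bsub>A\<^esub>, s \<otimes>\<^bsub>B\<^esub> p n))"
  moreover define Q where "Q = (\<lambda>n. (\<zero>\<^bsub>A\<^esub>, s \<otimes>\<^bsub>B\<^esub> q n))"
  ultimately have PQ: "P \<otimes>\<^bsub>UP AJ\<^esub> Q = (\<lambda>n. \<zero>\<^bsub>AJ\<^esub>)"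
    using scaled_UP_mult_eq_zero_amalgamation[OF s(1) central pB qB] by simp
  have P: "P \<in> up AJ" and Q: "Q \<in> up AJ"
    unfolding P_def Q_def using scaled_up_amalgamation s(1) pB qB by blast+
  obtain n :: nat where "(P i \<otimes>\<^bsub>AJ\<^esub> Q j) [^]\<^bsub>AJ\<^esub> n = \<zero>\<^bsub>AJ\<^esub>"
    using AJ P Q PQ unfolding weak_armendariz_iff nil_elems_def by blast
  then have "snd ((P i \<otimes>\<^bsub>AJ\<^esub> Q j) [^]\<^bsub>AJ\<^esub> n) = \<zero>\<^bsub>B\<^esub>"
    by (simp add: amalgamation_simps)
  moreover have "P i \<otimes>\<^bsub>AJ\<^esub> Q j \<in> carrier AJ"
    using P Q by (simp add: ring.ring_simprules(5)[OF ring_amalgamation] mem_upD)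
  moreover have coeffs: "p i \<in> carrier B" "q j \<in> carrier B" using pB qB by auto
  moreover have "snd (P i \<otimes>\<^bsub>AJ\<^esub> Q j) = s \<otimes>\<^bsub>B\<^esub> (s \<otimes>\<^bsub>B\<^esub> (p i \<otimes>\<^bsub>B\<^esub> q j))"
    using coeffs by (simp add: P_def Q_def amalgamation_simps
        B.central_mult_mult[OF s_carrier central])
  ultimately have "(s \<otimes>\<^bsub>B\<^esub> (s \<otimes>\<^bsub>B\<^esub> (p i \<otimes>\<^bsub>B\<^esub> q j))) [^]\<^bsub>B\<^esub> n = \<zero>\<^bsub>B\<^esub>"
    by (simp add: snd.hom_nat_pow)
  then have "(p i \<otimes>\<^bsub>B\<^esub> q j) [^]\<^bsub>B\<^esub> n = \<zero>\<^bsub>B\<^esub>"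
    using B.regular_central_mult_nilpotent[OF s(2)] coeffs s_carrier by (meson B.m_closed)
  moreover have "p i \<otimes>\<^bsub>fAJ\<^esub> q j \<in> carrier fAJ"
    using p q by (simp add: ring.ring_simprules(5)[OF ring_img_plus_ideal] mem_upD)
  ultimately show "p i \<otimes>\<^bsub>fAJ\<^esub> q j \<in> nil_elems fAJ"
    by (auto simp: nil_elems_def img_plus_ideal_simps img_plus_ideal_def
        simp flip: B.nat_pow_consistent)
qed

end

theorem theorem4p1:
  fixes A :: "('a, 'm) ring_scheme" and B :: "('b, 'n) ring_scheme"
    and f :: "'a \<Rightarrow> 'b" and J :: "'b set"
  assumes "ring A" and "ring B"
    and "f \<in> ring_hom A B"
    and "ideal J B" and "J \<noteq> carrier B"
    and "J \<inter> regular_central B \<noteq> {}"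
  shows "weak_armendariz (amalgamation A B f J) \<longleftrightarrow>
         weak_armendariz A \<and> weak_armendariz (img_plus_ideal A B f J)"
proof -
  obtain s where "s \<in> J" "s \<in> regular_central B" using assms(6) by blast
  then show ?thesis
    using weak_armendariz_base_if_amalgamation[OF assms(1-4)]
      weak_armendariz_img_plus_ideal_if_amalgamation[OF assms(1-4)]
      weak_armendariz_amalgamationI[OF assms(1-4)]
    by blast
qed

end
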